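(* Let $k\geq 2$ be an integer and put $\psi=-\frac{1+x}{2x}$ and \[\gamma(x,0)=\frac{k}{1+3x}+\frac{2x}{(1+3x)^{2}}\cdot\frac{U_{k}(\psi)-U_{k-1}(\psi)-1}{U_{k}(\psi)}.\] Then the generating function $\sum_{n\geq 0} c_{n,k}x^n$, where $c_{n,k}$ is the number of cyclic Hertzsprung words of length $n$ over $k$, equals \[1+\frac{1-3x}{(1+3x)(1-x)}\left[\frac{1}{1-x\gamma(x,0)}+\frac{2x(k+1)}{(1-3x)U_{k}(\psi)}\left(\frac{1-x\,\frac{1+k-U_{k}(\psi)}{1+3x}}{1-x\gamma(x,0)}+U_{k-1}(\psi)-1\right)-kx-1\right].\]
   Context: For an integer $k\geq 2$, $[k]=\{1,\ldots,k\}$ and a word over $k$ of length $n$ is an element $w=w_1\cdots w_n\in[k]^n$ (including the empty word for $n=0$). $\mathrm{cs}(w)$ is the number of indices $0\leq i\leq n-1$ with $|w_{i+1}-w_i|\leq 1$, where $w_0$ means $w_n$ (for a word of length 1 this counts the pair $(w_1,w_1)$, so $\mathrm{cs}=1$; for the empty word $\mathrm{cs}=0$). A word $w$ is called cyclic Hertzsprung if $\mathrm{cs}(w)=0$. $U_n$ denotes the Chebyshev polynomial of the second kind: $U_0(x)=1$, $U_1(x)=2x$, $U_{n+1}(x)=2xU_n(x)-U_{n-1}(x)$. *)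

theory Defs
  imports Complex_Main
begin

fun chebU :: "nat \<Rightarrow> real \<Rightarrow> real" where
  "chebU 0 x = 1"
| "chebU (Suc 0) x = 2 * x"
| "chebU (Suc (Suc n)) x = 2 * x * chebU (Suc n) x - chebU n x"

text \<open>cs(w): number of cyclically adjacent positions whose letters differ by at most 1.
  With 0-based list indices, the pairs are (w!i, w!((i+1) mod n)) for i < n,
  which are exactly the pairs (w_i, w_{i+1}) for 0 \<le> i \<le> n-1 with w_0 = w_n.\<close>
definition cs :: "nat list \<Rightarrow> nat" where
  "cs w = card {i. i < length w \<and>
      \<bar>int (w ! ((i + 1) mod length w)) - int (w ! i)\<bar> \<le> 1}"

definition cyc_hertz_count :: "nat \<Rightarrow> nat \<Rightarrow> nat" where
  "cyc_hertz_count n k = card {w :: nat list. length w = n \<and> set w \<subseteq> {1..k} \<and> cs w = 0}"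

definition psi :: "real \<Rightarrow> real" where
  "psi x = - (1 + x) / (2 * x)"

definition gamma0 :: "nat \<Rightarrow> real \<Rightarrow> real" where
  "gamma0 k x = real k / (1 + 3 * x)
     + (2 * x / (1 + 3 * x)^2) *
       ((chebU k (psi x) - chebU (k - 1) (psi x) - 1) / chebU k (psi x))"

definition cyc_hertz_gf :: "nat \<Rightarrow> real \<Rightarrow> real" where
  "cyc_hertz_gf k x = 1 + (1 - 3 * x) / ((1 + 3 * x) * (1 - x)) *
     ( 1 / (1 - x * gamma0 k x)
       + (2 * x * (real k + 1)) / ((1 - 3 * x) * chebU k (psi x)) *
         ( (1 - x * ((1 + real k - chebU k (psi x)) / (1 + 3 * x))) / (1 - x * gamma0 k x)
           + chebU (k - 1) (psi x) - 1)
       - real k * x - 1)"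

end

theory Submission
  imports Defs
begin

(*
  A word is cyclic Hertzsprung iff cyclically consecutive letters differ by at least 2. So for
  n \<ge> 1, c(n,k) is the number of closed walks of length n in the graph on [k] joining letters at
  distance at least 2, i.e. tr A^n for its adjacency matrix A = J - T (J all ones, T tridiagonal),
  and the generating function is 1 - k + tr (I - x A)^-1 for small x.

  Here I - x A = B - x 1 1^T with B = I + x T tridiagonal. Solutions of the homogeneous
  recurrence x u(j-1) + (1 + x) u(j) + x u(j+1) = 0 are Chebyshev polynomials U at
  psi = -(1 + x)/(2x), which makes B^-1 explicit; the Sherman-Morrison formula then gives
  (I - x A)^-1 = B^-1 + x u u^T / (1 - x 1^T u) with u = B^-1 1, and 1^T u is gamma(x,0).
  Instead of inverting matrices we check that this candidate satisfies the first-step equations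
  F = I + x A F of the walk generating functions, whose solution is unique once k |x| < 1.
  Finally the trace is evaluated with closed forms for sum U_j, sum U_j^2, sum U_j U_(k-1-j) and
  Cassini's identity.
*)

section \<open>Cyclic Hertzsprung words as closed walks\<close>

definition far :: "nat \<Rightarrow> nat \<Rightarrow> bool" where
  "far p q \<longleftrightarrow> 1 < \<bar>int q - int p\<bar>"

definition far_nbrs :: "nat \<Rightarrow> nat \<Rightarrow> nat set" where
  "far_nbrs k a = {c \<in> {1..k}. far a c}"

fun far_walks :: "nat \<Rightarrow> nat \<Rightarrow> nat \<Rightarrow> nat \<Rightarrow> nat" where
  "far_walks k 0 a b = (if a = b then 1 else 0)"
| "far_walks k (Suc n) a b = (\<Sum>c\<in>far_nbrs k a. far_walks k n c b)"

definition far_paths :: "nat \<Rightarrow> nat \<Rightarrow> nat \<Rightarrow> nat \<Rightarrow> nat list set" where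
  "far_paths k m a b = {v. length v = m \<and> set v \<subseteq> {1..k} \<and> successively far (a # v @ [b])}"

lemma finite_far_nbrs [simp]: "finite (far_nbrs k a)"
  by (simp add: far_nbrs_def)

lemma card_far_nbrs_le: "card (far_nbrs k a) \<le> k"
proof -
  have "card (far_nbrs k a) \<le> card {1..k}"
    by (rule card_mono) (auto simp: far_nbrs_def)
  then show ?thesis
    by simp
qed

lemma finite_far_paths: "finite (far_paths k m a b)"
proof (rule finite_subset)
  show "far_paths k m a b \<subseteq> {v. set v \<subseteq> {1..k} \<and> length v = m}"
    by (auto simp: far_paths_def)
qed (simp add: finite_lists_length_eq)

lemma far_paths_Suc:
  "far_paths k (Suc m) a b = (\<Union>c\<in>far_nbrs k a. (#) c ` far_paths k m c b)"
  by (auto simp: far_paths_def far_nbrs_def length_Suc_conv)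

lemma card_far_paths:
  assumes "b \<in> {1..k}"
  shows "card (far_paths k m a b) = far_walks k (Suc m) a b"
proof (induction m arbitrary: a)
  case 0
  have "far_paths k 0 a b = (if far a b then {[]} else {})"
    by (auto simp: far_paths_def)
  moreover have "far_nbrs k a \<inter> {b} = (if far a b then {b} else {})"
    using assms by (auto simp: far_nbrs_def)
  ultimately show ?case
    using assms by (simp add: sum.If_cases far_nbrs_def)
next
  case (Suc m)
  have "card (far_paths k (Suc m) a b) = (\<Sum>c\<in>far_nbrs k a. card ((#) c ` far_paths k m c b))"
    unfolding far_paths_Suc by (rule card_UN_disjoint) (auto simp: finite_far_paths)
  also have "\<dots> = (\<Sum>c\<in>far_nbrs k a. far_walks k (Suc m) c b)"
    by (simp add: card_image Suc.IH del: far_walks.simps)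
  finally show ?case
    by simp
qed

lemma cs_Cons_eq_0_iff: "cs (a # v) = 0 \<longleftrightarrow> successively far (a # v @ [a])"
proof -
  let ?w = "a # v" and ?p = "a # v @ [a]"
  have "?p ! i = ?w ! i" if "i < length ?w" for i
    using that by (auto simp: nth_append nth_Cons split: nat.splits)
  moreover have "?p ! Suc i = ?w ! (Suc i mod length ?w)" if "i < length ?w" for i
    using that by (cases "i = length v") (auto simp: nth_append)
  ultimately have "cs ?w = 0 \<longleftrightarrow> (\<forall>i < length ?w. far (?p ! i) (?p ! Suc i))"
    by (auto simp: cs_def far_def not_le)
  also have "\<dots> \<longleftrightarrow> successively far ?p"
    by (simp add: successively_conv_nth)
  finally show ?thesis .
qed

lemma cyc_hertz_count_0: "cyc_hertz_count 0 k = 1"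
proof -
  have "{w :: nat list. length w = 0 \<and> set w \<subseteq> {1..k} \<and> cs w = 0} = {[]}"
    by (auto simp: cs_def)
  then show ?thesis
    by (simp add: cyc_hertz_count_def)
qed

lemma cyc_hertz_count_Suc:
  "cyc_hertz_count (Suc m) k = (\<Sum>a\<in>{1..k}. far_walks k (Suc m) a a)"
proof -
  have "{w. length w = Suc m \<and> set w \<subseteq> {1..k} \<and> cs w = 0}
        = (\<Union>a\<in>{1..k}. (#) a ` far_paths k m a a)"
    by (auto simp: far_paths_def length_Suc_conv cs_Cons_eq_0_iff)
  then have "cyc_hertz_count (Suc m) k = card (\<Union>a\<in>{1..k}. (#) a ` far_paths k m a a)"
    by (simp add: cyc_hertz_count_def)
  also have "\<dots> = (\<Sum>a\<in>{1..k}. card ((#) a ` far_paths k m a a))"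
    by (rule card_UN_disjoint) (auto simp: finite_far_paths)
  also have "\<dots> = (\<Sum>a\<in>{1..k}. far_walks k (Suc m) a a)"
    by (simp add: card_image card_far_paths)
  finally show ?thesis .
qed

lemma far_walks_le_power: "far_walks k n a b \<le> k ^ n"
proof (induction n arbitrary: a)
  case (Suc n)
  have "far_walks k (Suc n) a b \<le> card (far_nbrs k a) * k ^ n"
    using sum_mono[of "far_nbrs k a" "\<lambda>c. far_walks k n c b" "\<lambda>_. k ^ n"] Suc by simp
  also have "\<dots> \<le> k ^ Suc n"
    using card_far_nbrs_le[of k a] by simp
  finally show ?case .
qed simp

section \<open>Chebyshev polynomials as a Lucas sequence\<close>

lemma sum_reflect: "(\<Sum>a = 1..n. f (Suc n - a)) = (\<Sum>a = 1..n. f a :: 'a::comm_monoid_add)"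
  using sum.atLeastAtMost_rev[of f 1 n] by simp

text \<open>The Lucas sequence with parameters \<open>(2t, 1)\<close>, i.e. \<open>U\<close> shifted by one: the extra
  value \<open>lucasU t 0 = 0\<close> plays the role of \<open>U\<^sub>-\<^sub>1\<close> and keeps the index arithmetic
  free of truncated subtraction.\<close>
fun lucasU :: "real \<Rightarrow> nat \<Rightarrow> real" where
  "lucasU t 0 = 0"
| "lucasU t (Suc 0) = 1"
| "lucasU t (Suc (Suc n)) = 2 * t * lucasU t (Suc n) - lucasU t n"

lemma chebU_eq_lucasU: "chebU n t = lucasU t (Suc n)"
  by (induction n t rule: chebU.induct) auto

lemma lucasU_add:
  "lucasU t (Suc i) * lucasU t (Suc j) - lucasU t i * lucasU t j = lucasU t (Suc (i + j))"
proof (induction t i rule: lucasU.induct)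
  case (3 t n)
  let ?V = "lucasU t"
  have "?V (Suc (Suc (Suc n))) * ?V (Suc j) - ?V (Suc (Suc n)) * ?V j
      = 2 * t * (?V (Suc (Suc n)) * ?V (Suc j) - ?V (Suc n) * ?V j)
        - (?V (Suc n) * ?V (Suc j) - ?V n * ?V j)"
    by (simp add: algebra_simps)
  also have "\<dots> = ?V (Suc (Suc (Suc n) + j))"
    using 3 by simp
  finally show ?case .
qed simp_all

lemma lucasU_cassini: "lucasU t (Suc n) ^ 2 - lucasU t n * lucasU t (Suc (Suc n)) = 1"
  by (induction n) (auto simp: power2_eq_square algebra_simps)

lemma lucasU_sum:
  "2 * (t - 1) * (\<Sum>a = 1..n. lucasU t a) = lucasU t (Suc n) - lucasU t n - 1"
  by (induction n) (auto simp: algebra_simps)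

lemma lucasU_sum_squares:
  "4 * (1 - t\<^sup>2) * (\<Sum>a = 1..n. lucasU t a ^ 2)
     = 2 * real n - lucasU t n * (lucasU t (Suc (Suc n)) - lucasU t n)"
proof (induction n)
  case (Suc n)
  then show ?case
    using lucasU_cassini[of t n] by (simp add: algebra_simps power2_eq_square)
qed simp

lemma lucasU_convolution:
  "2 * (1 - t\<^sup>2) * (\<Sum>a = 1..n. lucasU t a * lucasU t (Suc n - a))
     = (real n + 1) * lucasU t n - real n * t * lucasU t (Suc n)"
proof -
  let ?V = "lucasU t"
  define w where "w m = (\<Sum>a\<le>m. ?V a * ?V (m - a))" for m
  have w_rec: "w (Suc (Suc m)) = 2 * t * w (Suc m) - w m + ?V (Suc m)" for m
  proof -
    have "?V a * ?V (Suc (Suc m) - a) = 2 * t * (?V a * ?V (Suc m - a)) - ?V a * ?V (m - a)"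
      if "a \<le> m" for a
      using that by (simp add: Suc_diff_le algebra_simps)
    then have "(\<Sum>a\<le>m. ?V a * ?V (Suc (Suc m) - a))
        = 2 * t * (\<Sum>a\<le>m. ?V a * ?V (Suc m - a)) - w m"
      by (simp add: w_def sum_subtractf sum_distrib_left)
    then show ?thesis
      by (simp add: w_def)
  qed
  have w_closed: "2 * (1 - t\<^sup>2) * w (Suc m) = (real m + 1) * ?V m - real m * t * ?V (Suc m)" for m
  proof (induction m rule: induct_nat_012)
    case (ge2 m)
    have "2 * (1 - t\<^sup>2) * w (Suc (Suc (Suc m)))
        = 2 * t * (2 * (1 - t\<^sup>2) * w (Suc (Suc m))) - 2 * (1 - t\<^sup>2) * w (Suc m)
          + 2 * (1 - t\<^sup>2) * ?V (Suc (Suc m))"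
      unfolding w_rec[of "Suc m"] by (simp add: algebra_simps)
    also have "\<dots> = (real (Suc (Suc m)) + 1) * ?V (Suc (Suc m))
        - real (Suc (Suc m)) * t * ?V (Suc (Suc (Suc m)))"
      unfolding ge2 by (simp add: algebra_simps power2_eq_square)
    finally show ?case .
  qed (simp_all add: w_def power2_eq_square algebra_simps)
  have "w (Suc n) = (\<Sum>a = 1..n. ?V a * ?V (Suc n - a))"
    unfolding w_def by (rule sum.mono_neutral_right) (auto simp: not_le)
  with w_closed show ?thesis
    by metis
qed

lemma abs_lucasU_le_Suc:
  assumes "1 \<le> \<bar>t\<bar>"
  shows "\<bar>lucasU t n\<bar> \<le> \<bar>lucasU t (Suc n)\<bar>"
proof (induction n)
  case 0
  show ?case
    by simp
next
  case (Suc n)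
  have "2 * \<bar>lucasU t (Suc n)\<bar> \<le> \<bar>2 * t * lucasU t (Suc n)\<bar>"
    using assms by (simp add: abs_mult mult_right_mono)
  then show ?case
    using Suc by simp
qed

lemma abs_lucasU_mono:
  assumes "1 \<le> \<bar>t\<bar>" and "m \<le> n"
  shows "\<bar>lucasU t m\<bar> \<le> \<bar>lucasU t n\<bar>"
  using assms(2) by (induction rule: dec_induct) (auto intro: order_trans abs_lucasU_le_Suc[OF assms(1)])

lemma one_le_abs_lucasU:
  assumes "1 \<le> \<bar>t\<bar>"
  shows "1 \<le> \<bar>lucasU t (Suc n)\<bar>"
  using abs_lucasU_mono[OF assms, of 1 "Suc n"] by simp

lemma psi_mult: "x \<noteq> 0 \<Longrightarrow> 2 * psi x * x = - (1 + x)"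
  by (simp add: psi_def)

lemma one_le_abs_psi:
  assumes "x \<noteq> 0" and "\<bar>x\<bar> \<le> 1 / 3"
  shows "1 \<le> \<bar>psi x\<bar>"
proof -
  have "2 * \<bar>x\<bar> \<le> \<bar>1 + x\<bar>"
    using assms(2) by linarith
  then show ?thesis
    using assms(1) by (simp add: psi_def abs_divide abs_minus_commute le_divide_eq)
qed

lemma lucasU_psi_rec:
  assumes "x \<noteq> 0"
  shows "x * lucasU (psi x) n + (1 + x) * lucasU (psi x) (Suc n) + x * lucasU (psi x) (Suc (Suc n)) = 0"
proof -
  have "x * lucasU (psi x) n + (1 + x) * lucasU (psi x) (Suc n) + x * lucasU (psi x) (Suc (Suc n))
      = (1 + x + 2 * psi x * x) * lucasU (psi x) (Suc n)"
    by (simp add: algebra_simps)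
  also have "\<dots> = 0"
    using psi_mult[OF assms] by simp
  finally show ?thesis .
qed

declare lucasU.simps(3) [simp del]

lemma psi_square:
  assumes "x \<noteq> 0"
  shows "4 * (1 - (psi x)\<^sup>2) * x\<^sup>2 = (1 + 3 * x) * (x - 1)"
proof -
  have "4 * (1 - (psi x)\<^sup>2) * x\<^sup>2 = 4 * x\<^sup>2 - (2 * psi x * x)\<^sup>2"
    by (simp add: algebra_simps power2_eq_square)
  also have "(2 * psi x * x)\<^sup>2 = (1 + x)\<^sup>2"
    by (simp add: psi_mult[OF assms]) (simp add: power2_eq_square algebra_simps)
  also have "4 * x\<^sup>2 - (1 + x)\<^sup>2 = (1 + 3 * x) * (x - 1)"
    by (simp add: algebra_simps power2_eq_square)
  finally show ?thesis .
qed

lemma lucasU_psi_Suc_Suc: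
  assumes "x \<noteq> 0"
  shows "x * lucasU (psi x) (Suc (Suc n)) = - (1 + x) * lucasU (psi x) (Suc n) - x * lucasU (psi x) n"
  using lucasU_psi_rec[OF assms, of n] by (simp add: algebra_simps)

lemma lucasU_psi_cassini:
  assumes "x \<noteq> 0"
  shows "x * lucasU (psi x) (Suc n) ^ 2 + (1 + x) * lucasU (psi x) (Suc n) * lucasU (psi x) n
           + x * lucasU (psi x) n ^ 2 = x"
proof -
  have "x = x * (lucasU (psi x) (Suc n) ^ 2 - lucasU (psi x) n * lucasU (psi x) (Suc (Suc n)))"
    by (simp add: lucasU_cassini)
  also have "\<dots> = x * lucasU (psi x) (Suc n) ^ 2
      - lucasU (psi x) n * (x * lucasU (psi x) (Suc (Suc n)))"
    by (simp add: algebra_simps)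
  finally show ?thesis
    unfolding lucasU_psi_Suc_Suc[OF assms] by (simp add: algebra_simps power2_eq_square)
qed

lemma lucasU_psi_sum_squares:
  assumes "x \<noteq> 0" and "1 + 3 * x \<noteq> 0" and "x \<noteq> 1"
  shows "(\<Sum>a = 1..n. lucasU (psi x) a ^ 2)
           = x * (2 * real n * x + lucasU (psi x) n
                   * ((1 + x) * lucasU (psi x) (Suc n) + 2 * x * lucasU (psi x) n))
             / ((1 + 3 * x) * (x - 1))"
proof -
  have "(1 + 3 * x) * (x - 1) * (\<Sum>a = 1..n. lucasU (psi x) a ^ 2)
      = x\<^sup>2 * (4 * (1 - (psi x)\<^sup>2) * (\<Sum>a = 1..n. lucasU (psi x) a ^ 2))"
    unfolding psi_square[OF assms(1), symmetric] by (simp only: mult_ac)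
  also have "\<dots> = x\<^sup>2 * (2 * real n - lucasU (psi x) n
                        * (lucasU (psi x) (Suc (Suc n)) - lucasU (psi x) n))"
    by (simp only: lucasU_sum_squares)
  also have "\<dots> = x * (2 * real n * x - lucasU (psi x) n
                        * (x * lucasU (psi x) (Suc (Suc n)) - x * lucasU (psi x) n))"
    by (simp add: algebra_simps power2_eq_square)
  also have "\<dots> = x * (2 * real n * x + lucasU (psi x) n
                        * ((1 + x) * lucasU (psi x) (Suc n) + 2 * x * lucasU (psi x) n))"
    unfolding lucasU_psi_Suc_Suc[OF assms(1)] by (simp add: algebra_simps)
  finally show ?thesis
    using assms(2,3) by (simp add: nonzero_eq_divide_eq mult_ac)
qed

lemma lucasU_psi_convolution:
  assumes "x \<noteq> 0" and "1 + 3 * x \<noteq> 0" and "x \<noteq> 1"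
  shows "(\<Sum>a = 1..n. lucasU (psi x) a * lucasU (psi x) (Suc n - a))
           = x * (2 * x * (real n + 1) * lucasU (psi x) n + real n * (1 + x) * lucasU (psi x) (Suc n))
             / ((1 + 3 * x) * (x - 1))"
proof -
  have "(1 + 3 * x) * (x - 1) * (\<Sum>a = 1..n. lucasU (psi x) a * lucasU (psi x) (Suc n - a))
      = 2 * x\<^sup>2 * (2 * (1 - (psi x)\<^sup>2) * (\<Sum>a = 1..n. lucasU (psi x) a * lucasU (psi x) (Suc n - a)))"
    unfolding psi_square[OF assms(1), symmetric] by (simp only: mult_ac)
  also have "\<dots> = 2 * x\<^sup>2 * ((real n + 1) * lucasU (psi x) n - real n * psi x * lucasU (psi x) (Suc n))"
    by (simp only: lucasU_convolution)
  also have "\<dots> = x * (2 * x * (real n + 1) * lucasU (psi x) n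
                        - real n * (2 * psi x * x) * lucasU (psi x) (Suc n))"
    by (simp add: algebra_simps power2_eq_square)
  also have "\<dots> = x * (2 * x * (real n + 1) * lucasU (psi x) n + real n * (1 + x) * lucasU (psi x) (Suc n))"
    unfolding psi_mult[OF assms(1)] by (simp add: algebra_simps)
  finally show ?thesis
    using assms(2,3) by (simp add: nonzero_eq_divide_eq mult_ac)
qed

lemma lucasU_psi_sum:
  assumes "x \<noteq> 0" and "1 + 3 * x \<noteq> 0"
  shows "(\<Sum>a = 1..n. lucasU (psi x) a)
           = - x * (lucasU (psi x) (Suc n) - lucasU (psi x) n - 1) / (1 + 3 * x)"
proof -
  have "1 + 3 * x = - x * (2 * (psi x - 1))"
    using psi_mult[OF assms(1)] by (simp add: algebra_simps)
  then have "(1 + 3 * x) * (\<Sum>a = 1..n. lucasU (psi x) a)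
      = - x * (lucasU (psi x) (Suc n) - lucasU (psi x) n - 1)"
    by (metis lucasU_sum mult.assoc)
  then show ?thesis
    using assms(2) by (metis nonzero_mult_div_cancel_left)
qed

section \<open>The inverse of \<open>I - x A\<close>\<close>

text \<open>\<open>tri_inv x k\<close> is the inverse of the tridiagonal \<open>k \<times> k\<close> matrix \<open>B\<close> with \<open>1 + x\<close> on
  the diagonal and \<open>x\<close> beside it, \<open>tri_rowsum x k\<close> its vector of row sums and \<open>far_inv x k\<close>
  the Sherman-Morrison update \<open>(B - x 1 1\<^sup>T)\<^sup>-\<^sup>1\<close>. At the indices \<open>0\<close> and \<open>k + 1\<close>
  all of them vanish, which supplies the boundary values of the recurrences below.\<close>

definition tri_inv :: "real \<Rightarrow> nat \<Rightarrow> nat \<Rightarrow> nat \<Rightarrow> real" where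
  "tri_inv x k a b = - lucasU (psi x) (min a b) * lucasU (psi x) (Suc k - max a b)
                       / (x * lucasU (psi x) (Suc k))"

definition tri_rowsum :: "real \<Rightarrow> nat \<Rightarrow> nat \<Rightarrow> real" where
  "tri_rowsum x k a = (lucasU (psi x) (Suc k) - lucasU (psi x) a - lucasU (psi x) (Suc k - a))
                        / ((1 + 3 * x) * lucasU (psi x) (Suc k))"

definition tri_total :: "real \<Rightarrow> nat \<Rightarrow> real" where
  "tri_total x k = (\<Sum>a = 1..k. tri_rowsum x k a)"

definition far_inv :: "real \<Rightarrow> nat \<Rightarrow> nat \<Rightarrow> nat \<Rightarrow> real" where
  "far_inv x k a b = tri_inv x k a b + x * tri_rowsum x k a * tri_rowsum x k b / (1 - x * tri_total x k)"

lemma tri_inv_commute: "tri_inv x k a b = tri_inv x k b a"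
  by (simp add: tri_inv_def min.commute max.commute)

lemma tri_inv_0 [simp]: "tri_inv x k 0 b = 0"
  by (simp add: tri_inv_def)

lemma tri_inv_Suc_bound [simp]: "b \<le> Suc k \<Longrightarrow> tri_inv x k (Suc k) b = 0"
  by (simp add: tri_inv_def max_def)

lemma tri_rowsum_0 [simp]: "tri_rowsum x k 0 = 0"
  by (simp add: tri_rowsum_def)

lemma tri_rowsum_Suc_bound [simp]: "tri_rowsum x k (Suc k) = 0"
  by (simp add: tri_rowsum_def)

lemma sum_far_nbrs:
  fixes g :: "nat \<Rightarrow> 'a::comm_monoid_add"
  assumes "a \<in> {1..k}" and "g 0 = 0" and "g (Suc k) = 0"
  shows "(\<Sum>c = 1..k. g c) = (\<Sum>c\<in>far_nbrs k a. g c) + (g (a - 1) + g a + g (a + 1))"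
proof -
  let ?near = "{a - 1, a, a + 1}"
  have "{1..k} = far_nbrs k a \<union> (?near \<inter> {1..k})"
    by (auto simp: far_nbrs_def far_def)
  then have "(\<Sum>c = 1..k. g c) = (\<Sum>c \<in> far_nbrs k a \<union> (?near \<inter> {1..k}). g c)"
    by simp
  also have "\<dots> = (\<Sum>c\<in>far_nbrs k a. g c) + (\<Sum>c \<in> ?near \<inter> {1..k}. g c)"
    by (rule sum.union_disjoint) (auto simp: far_nbrs_def far_def)
  also have "(\<Sum>c \<in> ?near \<inter> {1..k}. g c) = (\<Sum>c \<in> ?near. g c)"
  proof (rule sum.mono_neutral_left)
    show "\<forall>c \<in> ?near - ?near \<inter> {1..k}. g c = 0"
    proof
      fix c
      assume "c \<in> ?near - ?near \<inter> {1..k}"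
      then have "c = 0 \<or> c = Suc k"
        using assms(1) by auto
      then show "g c = 0"
        using assms(2,3) by auto
    qed
  qed auto
  also have "\<dots> = g (a - 1) + g a + g (a + 1)"
    using assms(1) by (cases a) (auto simp: add.assoc)
  finally show ?thesis .
qed

locale far_inverse =
  fixes x :: real and k :: nat
  assumes x_ne_0: "x \<noteq> 0"
    and lucasU_ne_0: "lucasU (psi x) (Suc k) \<noteq> 0"
    and one_plus_3x_ne_0: "1 + 3 * x \<noteq> 0"
    and denom_ne_0: "1 - x * tri_total x k \<noteq> 0"
begin

abbreviation V :: "nat \<Rightarrow> real" where
  "V \<equiv> lucasU (psi x)"

abbreviation P :: real where
  "P \<equiv> lucasU (psi x) (Suc k)"

lemma tri_inv_le: "c \<le> b \<Longrightarrow> tri_inv x k c b = - V c * V (Suc k - b) / (x * P)"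
  by (simp add: tri_inv_def min_def max_def)

lemma tri_inv_ge: "b \<le> c \<Longrightarrow> tri_inv x k c b = - V b * V (Suc k - c) / (x * P)"
  by (simp add: tri_inv_def min_def max_def)

lemma tri_inv_row:
  assumes "a \<in> {1..k}" and "b \<in> {1..k}"
  shows "x * tri_inv x k (a - 1) b + (1 + x) * tri_inv x k a b + x * tri_inv x k (a + 1) b
           = (if a = b then 1 else 0)"
proof -
  obtain i j where a: "a = Suc i" and j: "k = a + j"
    using assms(1) by (metis atLeastAtMost_iff le_Suc_ex not0_implies_Suc not_one_le_zero)
  have diffs: "Suc k - i = Suc (Suc j)" "k - i = Suc j" "k - Suc i = j"
    by (simp_all add: a j)
  consider "a < b" | "b < a" | "a = b"
    by linarith
  then show ?thesis
  proof cases
    case 1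
    then have "x * tri_inv x k (a - 1) b + (1 + x) * tri_inv x k a b + x * tri_inv x k (a + 1) b
        = - V (Suc k - b) / (x * P) * (x * V i + (1 + x) * V (Suc i) + x * V (Suc (Suc i)))"
      using x_ne_0 lucasU_ne_0 by (simp add: a tri_inv_le field_simps)
    with 1 show ?thesis
      using lucasU_psi_rec[OF x_ne_0, of i] by simp
  next
    case 2
    then have "x * tri_inv x k (a - 1) b + (1 + x) * tri_inv x k a b + x * tri_inv x k (a + 1) b
        = - V b / (x * P) * (x * V j + (1 + x) * V (Suc j) + x * V (Suc (Suc j)))"
      using x_ne_0 lucasU_ne_0 by (simp add: a diffs tri_inv_ge field_simps)
    with 2 show ?thesis
      using lucasU_psi_rec[OF x_ne_0, of j] by simp
  next
    case 3
    then have b: "b = Suc i"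
      by (simp add: a)
    have rec: "x * V i + (1 + x) * V (Suc i) = - x * V (Suc (Suc i))"
      using lucasU_psi_rec[OF x_ne_0, of i] by simp
    have "x * tri_inv x k (a - 1) b + (1 + x) * tri_inv x k a b + x * tri_inv x k (a + 1) b
        = - (x * V i + (1 + x) * V (Suc i)) * V (Suc j) / (x * P) - V (Suc i) * V j / P"
      using x_ne_0 lucasU_ne_0
      by (simp add: a b diffs tri_inv_le tri_inv_ge field_simps)
    also have "\<dots> = (V (Suc (Suc i)) * V (Suc j) - V (Suc i) * V j) / P"
      unfolding rec using x_ne_0 lucasU_ne_0 by (simp add: field_simps)
    also have "\<dots> = 1"
      using lucasU_ne_0 lucasU_add[of "psi x" "Suc i" j] by (simp add: a j)
    finally show ?thesis
      using 3 by simp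
  qed
qed

lemma tri_rowsum_row:
  assumes "a \<in> {1..k}"
  shows "x * tri_rowsum x k (a - 1) + (1 + x) * tri_rowsum x k a + x * tri_rowsum x k (a + 1) = 1"
proof -
  obtain i j where a: "a = Suc i" and j: "k = a + j"
    using assms by (metis atLeastAtMost_iff le_Suc_ex not0_implies_Suc not_one_le_zero)
  have diffs: "Suc k - i = Suc (Suc j)" "k - i = Suc j" "k - Suc i = j"
    by (simp_all add: a j)
  have "x * tri_rowsum x k (a - 1) + (1 + x) * tri_rowsum x k a + x * tri_rowsum x k (a + 1)
      = (x * (P - V i - V (Suc (Suc j))) + (1 + x) * (P - V (Suc i) - V (Suc j))
          + x * (P - V (Suc (Suc i)) - V j)) / ((1 + 3 * x) * P)"
    by (simp add: tri_rowsum_def a diffs add_divide_distrib)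
  also have "\<dots> = ((1 + 3 * x) * P - (x * V i + (1 + x) * V (Suc i) + x * V (Suc (Suc i)))
      - (x * V j + (1 + x) * V (Suc j) + x * V (Suc (Suc j)))) / ((1 + 3 * x) * P)"
    by (simp add: algebra_simps)
  also have "\<dots> = 1"
    using one_plus_3x_ne_0 lucasU_ne_0 by (simp add: lucasU_psi_rec x_ne_0)
  finally show ?thesis .
qed

lemma sum_tri_inv_row:
  assumes "b \<le> k"
  shows "(\<Sum>c = 1..k. tri_inv x k b c) = tri_rowsum x k b"
proof -
  obtain j where j: "k = b + j"
    using assms le_Suc_ex by blast
  then have kb: "Suc k - b = Suc j"
    by simp
  have left: "(\<Sum>c = 1..b. tri_inv x k b c) = - V (Suc j) * (\<Sum>c = 1..b. V c) / (x * P)"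
    by (simp add: tri_inv_commute[of x k b] tri_inv_le kb sum_distrib_left sum_divide_distrib
        algebra_simps)
  have "(\<Sum>c = Suc b..k. tri_inv x k b c) = - V b * (\<Sum>c = Suc b..k. V (Suc k - c)) / (x * P)"
    by (simp add: tri_inv_commute[of x k b] tri_inv_ge sum_distrib_left sum_divide_distrib)
  also have "(\<Sum>c = Suc b..k. V (Suc k - c)) = (\<Sum>c = 1..j. V c)"
    by (rule sum.reindex_bij_witness[where i = "\<lambda>c. Suc k - c" and j = "\<lambda>c. Suc k - c"])
      (auto simp: j)
  finally have right: "(\<Sum>c = Suc b..k. tri_inv x k b c) = - V b * (\<Sum>c = 1..j. V c) / (x * P)" .
  define r where "r = 1 + 3 * x"
  have r: "r \<noteq> 0"
    using one_plus_3x_ne_0 by (simp add: r_def)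
  have "(\<Sum>c = 1..k. tri_inv x k b c) = (\<Sum>c = 1..b. tri_inv x k b c) + (\<Sum>c = Suc b..k. tri_inv x k b c)"
    using sum.ub_add_nat[of 1 b "tri_inv x k b" j] by (simp add: j)
  also have "\<dots> = (V (Suc j) * (V (Suc b) - V b - 1) + V b * (V (Suc j) - V j - 1)) / (r * P)"
    unfolding left right lucasU_psi_sum[OF x_ne_0 one_plus_3x_ne_0] r_def[symmetric]
    using x_ne_0 lucasU_ne_0 r by (simp add: field_simps)
  also have "\<dots> = tri_rowsum x k b"
    using lucasU_add[of "psi x" b j] by (simp add: tri_rowsum_def r_def kb j algebra_simps)
  finally show ?thesis .
qed

lemma sum_tri_inv_col:
  assumes "b \<le> k"
  shows "(\<Sum>c = 1..k. tri_inv x k c b) = tri_rowsum x k b"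
proof -
  have "(\<Sum>c = 1..k. tri_inv x k c b) = (\<Sum>c = 1..k. tri_inv x k b c)"
    by (intro sum.cong refl tri_inv_commute)
  with sum_tri_inv_row[OF assms] show ?thesis
    by simp
qed

lemma far_inv_0 [simp]: "far_inv x k 0 b = 0"
  by (simp add: far_inv_def)

lemma far_inv_Suc_bound [simp]: "b \<le> Suc k \<Longrightarrow> far_inv x k (Suc k) b = 0"
  by (simp add: far_inv_def)

lemma far_inv_eq_tri_inv:
  "far_inv x k c b = tri_inv x k c b + tri_rowsum x k c * (x * tri_rowsum x k b / (1 - x * tri_total x k))"
  by (simp add: far_inv_def mult_ac)

lemma sum_far_inv_col:
  assumes "b \<le> k"
  shows "(\<Sum>c = 1..k. far_inv x k c b) = tri_rowsum x k b / (1 - x * tri_total x k)"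
proof -
  define K where "K = x * tri_rowsum x k b / (1 - x * tri_total x k)"
  have "(\<Sum>c = 1..k. far_inv x k c b) = (\<Sum>c = 1..k. tri_inv x k c b) + (\<Sum>c = 1..k. tri_rowsum x k c) * K"
    unfolding far_inv_eq_tri_inv K_def[symmetric] by (simp only: sum.distrib sum_distrib_right)
  also have "\<dots> = tri_rowsum x k b + tri_total x k * K"
    unfolding sum_tri_inv_col[OF assms] tri_total_def ..
  also have "\<dots> = tri_rowsum x k b / (1 - x * tri_total x k)"
    using denom_ne_0 by (simp add: K_def field_simps)
  finally show ?thesis .
qed

lemma far_inv_row:
  assumes "a \<in> {1..k}" and "b \<in> {1..k}"
  shows "x * far_inv x k (a - 1) b + (1 + x) * far_inv x k a b + x * far_inv x k (a + 1) b
           = (if a = b then 1 else 0) + x * tri_rowsum x k b / (1 - x * tri_total x k)"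
proof -
  have "x * far_inv x k (a - 1) b + (1 + x) * far_inv x k a b + x * far_inv x k (a + 1) b
      = (x * tri_inv x k (a - 1) b + (1 + x) * tri_inv x k a b + x * tri_inv x k (a + 1) b)
        + (x * tri_rowsum x k (a - 1) + (1 + x) * tri_rowsum x k a + x * tri_rowsum x k (a + 1))
          * (x * tri_rowsum x k b / (1 - x * tri_total x k))"
    unfolding far_inv_eq_tri_inv by (simp only: algebra_simps)
  then show ?thesis
    using tri_inv_row[OF assms] tri_rowsum_row[OF assms(1)] by simp
qed

lemma far_inv_eq:
  assumes "a \<in> {1..k}" and "b \<in> {1..k}"
  shows "far_inv x k a b = (if a = b then 1 else 0) + x * (\<Sum>c\<in>far_nbrs k a. far_inv x k c b)"
proof -
  define \<delta> :: real where "\<delta> = (if a = b then 1 else 0)"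
  define U where "U = tri_rowsum x k b / (1 - x * tri_total x k)"
  define F where "F = (\<Sum>c\<in>far_nbrs k a. far_inv x k c b)"
  have "(\<Sum>c = 1..k. far_inv x k c b)
      = F + (far_inv x k (a - 1) b + far_inv x k a b + far_inv x k (a + 1) b)"
    unfolding F_def using assms by (intro sum_far_nbrs) auto
  then have "U = F + (far_inv x k (a - 1) b + far_inv x k a b + far_inv x k (a + 1) b)"
    unfolding U_def using assms(2) sum_far_inv_col[of b] by simp
  then have "x * U = x * F + x * far_inv x k (a - 1) b + x * far_inv x k a b + x * far_inv x k (a + 1) b"
    by (simp add: distrib_left)
  moreover have "x * far_inv x k (a - 1) b + far_inv x k a b + x * far_inv x k a b
      + x * far_inv x k (a + 1) b = \<delta> + x * U"
    using far_inv_row[OF assms] by (simp add: U_def \<delta>_def distrib_right)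
  ultimately show ?thesis
    unfolding F_def[symmetric] \<delta>_def[symmetric] by linarith
qed

end

section \<open>Generating functions\<close>

lemma summable_far_walks:
  assumes "real k * \<bar>x\<bar> < 1"
  shows "summable (\<lambda>n. real (far_walks k n a b) * x ^ n)"
proof (rule summable_comparison_test)
  show "\<exists>N. \<forall>n\<ge>N. norm (real (far_walks k n a b) * x ^ n) \<le> (real k * \<bar>x\<bar>) ^ n"
  proof (intro exI allI impI)
    fix n :: nat
    have "real (far_walks k n a b) \<le> real k ^ n"
      using far_walks_le_power[of k n a b] by (metis of_nat_le_iff of_nat_power)
    then show "norm (real (far_walks k n a b) * x ^ n) \<le> (real k * \<bar>x\<bar>) ^ n"
      by (simp add: abs_mult power_abs power_mult_distrib mult_right_mono)
  qed
  show "summable (\<lambda>n. (real k * \<bar>x\<bar>) ^ n)"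
    using assms by (simp add: summable_geometric)
qed

definition far_walks_gf :: "real \<Rightarrow> nat \<Rightarrow> nat \<Rightarrow> nat \<Rightarrow> real" where
  "far_walks_gf x k a b = (\<Sum>n. real (far_walks k n a b) * x ^ n)"

lemma far_walks_gf_eq:
  assumes "real k * \<bar>x\<bar> < 1"
  shows "far_walks_gf x k a b = (if a = b then 1 else 0) + x * (\<Sum>c\<in>far_nbrs k a. far_walks_gf x k c b)"
proof -
  let ?f = "\<lambda>c n. real (far_walks k n c b) * x ^ n"
  have "far_walks_gf x k a b = ?f a 0 + (\<Sum>n. ?f a (Suc n))"
    unfolding far_walks_gf_def using suminf_split_head[OF summable_far_walks[OF assms]] by simp
  also have "(\<Sum>n. ?f a (Suc n)) = (\<Sum>n. x * (\<Sum>c\<in>far_nbrs k a. ?f c n))"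
    by (simp add: sum_distrib_left sum_distrib_right algebra_simps)
  also have "\<dots> = x * (\<Sum>c\<in>far_nbrs k a. \<Sum>n. ?f c n)"
    using summable_far_walks[OF assms]
    by (simp add: suminf_mult summable_sum suminf_sum[symmetric])
  finally show ?thesis
    by (simp add: far_walks_gf_def)
qed

text \<open>\<open>x A\<close> is a contraction for the maximum norm, \<open>A\<close> being the adjacency matrix of
  \<open>far\<close> on \<open>{1..k}\<close>.\<close>
lemma far_system_unique:
  fixes g :: "nat \<Rightarrow> real"
  assumes xk: "real k * \<bar>x\<bar> < 1"
    and g: "\<And>a. a \<in> {1..k} \<Longrightarrow> g a = x * (\<Sum>c\<in>far_nbrs k a. g c)"
    and a: "a \<in> {1..k}"
  shows "g a = 0"
proof -
  define M where "M = Max ((\<lambda>c. \<bar>g c\<bar>) ` {1..k})"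
  have le_M: "\<bar>g c\<bar> \<le> M" if "c \<in> {1..k}" for c
    unfolding M_def using that by (intro Max_ge) auto
  obtain a0 where a0: "a0 \<in> {1..k}" "M = \<bar>g a0\<bar>"
    using Max_in[of "(\<lambda>c. \<bar>g c\<bar>) ` {1..k}"] a unfolding M_def by fastforce
  then have M_nonneg: "0 \<le> M"
    by simp
  have "M = \<bar>x\<bar> * \<bar>\<Sum>c\<in>far_nbrs k a0. g c\<bar>"
    using g[OF a0(1)] a0(2) by (simp add: abs_mult)
  also have "\<dots> \<le> \<bar>x\<bar> * (\<Sum>c\<in>far_nbrs k a0. \<bar>g c\<bar>)"
    by (intro mult_left_mono sum_abs) simp
  also have "\<dots> \<le> \<bar>x\<bar> * (\<Sum>c\<in>far_nbrs k a0. M)"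
    using le_M by (intro mult_left_mono sum_mono) (auto simp: far_nbrs_def)
  also have "\<dots> \<le> \<bar>x\<bar> * (real k * M)"
    using card_far_nbrs_le[of k a0] M_nonneg by (simp add: mult_left_mono mult_right_mono)
  finally have "M \<le> (real k * \<bar>x\<bar>) * M"
    by (simp add: algebra_simps)
  then have "(1 - real k * \<bar>x\<bar>) * M \<le> 0"
    by (simp add: algebra_simps)
  with xk M_nonneg have "M = 0"
    by (simp add: mult_le_0_iff)
  then show ?thesis
    using le_M[OF a] by simp
qed

lemma cyc_hertz_count_sums:
  assumes "real k * \<bar>x\<bar> < 1"
  shows "(\<lambda>n. real (cyc_hertz_count n k) * x ^ n) sums (1 - real k + (\<Sum>a = 1..k. far_walks_gf x k a a))"
proof -
  have "(\<lambda>n. real (cyc_hertz_count n k) * x ^ n)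
      = (\<lambda>n. (if n = 0 then 1 - real k else 0) + (\<Sum>a = 1..k. real (far_walks k n a a) * x ^ n))"
  proof
    fix n
    show "real (cyc_hertz_count n k) * x ^ n
        = (if n = 0 then 1 - real k else 0) + (\<Sum>a = 1..k. real (far_walks k n a a) * x ^ n)"
      by (cases n) (simp_all add: cyc_hertz_count_0 cyc_hertz_count_Suc sum_distrib_right)
  qed
  moreover have "(\<lambda>n. if n = 0 then 1 - real k else 0) sums (1 - real k)"
    using sums_single[of 0 "\<lambda>_. 1 - real k"] by simp
  moreover have "(\<lambda>n. \<Sum>a = 1..k. real (far_walks k n a a) * x ^ n) sums (\<Sum>a = 1..k. far_walks_gf x k a a)"
    unfolding far_walks_gf_def by (intro sums_sum summable_sums summable_far_walks[OF assms])
  ultimately show ?thesis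
    by (simp add: sums_add)
qed

context far_inverse
begin

lemma far_walks_gf_eq_far_inv:
  assumes "real k * \<bar>x\<bar> < 1" and "a \<in> {1..k}" and "b \<in> {1..k}"
  shows "far_walks_gf x k a b = far_inv x k a b"
proof -
  have "far_walks_gf x k a b - far_inv x k a b = 0"
  proof (rule far_system_unique[OF assms(1) _ assms(2)])
    fix c
    assume c: "c \<in> {1..k}"
    have "far_walks_gf x k c b - far_inv x k c b
        = x * (\<Sum>d\<in>far_nbrs k c. far_walks_gf x k d b) - x * (\<Sum>d\<in>far_nbrs k c. far_inv x k d b)"
      unfolding far_walks_gf_eq[OF assms(1), of c b] far_inv_eq[OF c assms(3)] by simp
    then show "far_walks_gf x k c b - far_inv x k c b
        = x * (\<Sum>d\<in>far_nbrs k c. far_walks_gf x k d b - far_inv x k d b)"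
      by (simp add: sum_subtractf right_diff_distrib)
  qed
  then show ?thesis
    by simp
qed

end

section \<open>The trace\<close>

lemma cyc_hertz_gf_affine:
  fixes x :: real and k :: nat
  defines "P \<equiv> chebU k (psi x)" and "Q \<equiv> chebU (k - 1) (psi x)"
  assumes "1 - x * gamma0 k x \<noteq> 0"
  shows "cyc_hertz_gf k x
           = 1 + (1 - 3 * x) / ((1 + 3 * x) * (1 - x))
                 * (2 * x * (real k + 1) / ((1 - 3 * x) * P) * (Q - 1) - real k * x - 1)
             + (1 - 3 * x) / ((1 + 3 * x) * (1 - x))
                 * (1 + 2 * x * (real k + 1) / ((1 - 3 * x) * P) * (1 - x * ((1 + real k - P) / (1 + 3 * x))))
               / (1 - x * gamma0 k x)"
proof -
  have "1 + a * (1 / d + c * (e / d + Q - 1) - f - 1) = 1 + a * (c * (Q - 1) - f - 1) + a * (1 + c * e) / d"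
    if "d \<noteq> 0" for a c d e f :: real
    using that by (simp add: field_simps)
  from this[OF assms(3)] show ?thesis
    unfolding cyc_hertz_gf_def P_def Q_def .
qed

lemma cyc_hertz_gf_identity:
  fixes x Lin Sq Conv :: real and k :: nat
  defines "P \<equiv> chebU k (psi x)" and "Q \<equiv> chebU (k - 1) (psi x)"
  assumes x: "x \<noteq> 0" and r: "1 + 3 * x \<noteq> 0" and m: "1 - x \<noteq> 0" and s: "1 - 3 * x \<noteq> 0"
    and P: "P \<noteq> 0" and D: "1 - x * gamma0 k x \<noteq> 0"
    and cassini: "x * P\<^sup>2 + (1 + x) * P * Q + x * Q\<^sup>2 = x"
    and Lin: "Lin = - x * (P - Q - 1) / (1 + 3 * x)"
    and Sq: "Sq = x * (2 * real k * x + Q * ((1 + x) * P + 2 * x * Q)) / ((1 + 3 * x) * (x - 1))"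
    and Conv: "Conv = x * (2 * x * (real k + 1) * Q + real k * (1 + x) * P) / ((1 + 3 * x) * (x - 1))"
  shows "cyc_hertz_gf k x = 1 - real k - Conv / (x * P)
           + x * ((real k - 4 * Lin / P + (2 * Sq + 2 * Conv) / P\<^sup>2) / (1 + 3 * x)\<^sup>2)
             / (1 - x * gamma0 k x)"
proof -
  define r where "r = 1 + 3 * x"
  define m where "m = 1 - x"
  define s where "s = 1 - 3 * x"
  define G where "G = P * r\<^sup>2 - x * (real k * r * P + 2 * x * (P - Q - 1))"
  define s0 where "s0 = 2 * real k * x + Q * ((1 + x) * P + 2 * x * Q)"
  define c0 where "c0 = 2 * x * (real k + 1) * Q + real k * (1 + x) * P"
  have nz: "r \<noteq> 0" "m \<noteq> 0" "s \<noteq> 0"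
    using r m s by (simp_all add: r_def m_def s_def)
  have rm: "(1 + 3 * x) * (x - 1) = - r * m"
    by (simp add: r_def m_def algebra_simps)
  have gamma: "1 - x * gamma0 k x = G / (P * r\<^sup>2)"
    unfolding gamma0_def P_def[symmetric] Q_def[symmetric] r_def[symmetric] G_def
    using nz P by (simp add: field_simps power2_eq_square)
  with D have G: "G \<noteq> 0"
    by auto
  define aL where "aL = 1 - real k - Conv / (x * P)"
  define bL where "bL = x * ((real k - 4 * Lin / P + (2 * Sq + 2 * Conv) / P\<^sup>2) / r\<^sup>2)"
  define aR where "aR = 1 + s / (r * m) * (2 * x * (real k + 1) / (s * P) * (Q - 1) - real k * x - 1)"
  define bR where "bR = s / (r * m) * (1 + 2 * x * (real k + 1) / (s * P) * (1 - x * ((1 + real k - P) / r)))"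
  define NA where "NA = c0 - 2 * x * (real k + 1) * (Q - 1) + s * P * (real k * x + 1) - real k * r * m * P"
  define NB where "NB = x * (real k * r * m * P\<^sup>2 + 4 * x * (P - Q - 1) * m * P - 2 * x * (s0 + c0))
                        - r * P * (s * r * P + 2 * x * (real k + 1) * (r - x * (1 + real k - P)))"
  have a: "aL - aR = NA / (r * m * P)"
    unfolding aL_def aR_def NA_def Conv[folded c0_def, unfolded rm] using x nz P by (simp add: field_simps)
  have b: "bL - bR = NB / (r ^ 3 * m * P\<^sup>2)"
    unfolding bL_def bR_def NB_def Lin Sq[folded s0_def, unfolded rm] Conv[folded c0_def, unfolded rm]
      r_def[symmetric] using x nz P
    by (simp add: field_simps power2_eq_square power3_eq_cube)
  txt \<open>Both sides are affine in \<open>1 / (1 - x * gamma0 k x)\<close>; cleared of denominators, the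
    difference of the two sides is a multiple of Cassini's identity.\<close>
  have "NA * G + NB = - 4 * x\<^sup>2 * (x * P\<^sup>2 + (1 + x) * P * Q + x * Q\<^sup>2 - x)"
    unfolding NA_def NB_def G_def s0_def c0_def r_def m_def s_def
    by (simp add: algebra_simps power2_eq_square)
  with cassini have num: "NA * G + NB = 0"
    by simp
  have "aL + bL / (1 - x * gamma0 k x) - (aR + bR / (1 - x * gamma0 k x))
      = (aL - aR) + (bL - bR) * (P * r\<^sup>2) / G"
    unfolding gamma using P nz G by (simp add: field_simps)
  also have "\<dots> = (NA * G + NB) / (r * m * P * G)"
    unfolding a b using P nz G by (simp add: field_simps power2_eq_square power3_eq_cube)
  finally have "aL + bL / (1 - x * gamma0 k x) = aR + bR / (1 - x * gamma0 k x)"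
    unfolding num by simp
  then show ?thesis
    using cyc_hertz_gf_affine[OF D, folded P_def Q_def]
    unfolding aL_def bL_def aR_def bR_def r_def m_def s_def by simp
qed

lemma abs_tri_total_le:
  assumes psi: "1 \<le> \<bar>psi x\<bar>" and r: "1 / 2 \<le> \<bar>1 + 3 * x\<bar>"
  shows "\<bar>tri_total x k\<bar> \<le> 6 * real k"
proof -
  let ?V = "lucasU (psi x)"
  have P: "1 \<le> \<bar>?V (Suc k)\<bar>"
    by (rule one_le_abs_lucasU[OF psi])
  have "\<bar>tri_rowsum x k a\<bar> \<le> 6" if "a \<in> {1..k}" for a
  proof -
    have "\<bar>?V a\<bar> \<le> \<bar>?V (Suc k)\<bar>" "\<bar>?V (Suc k - a)\<bar> \<le> \<bar>?V (Suc k)\<bar>"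
      using that by (auto intro: abs_lucasU_mono[OF psi])
    then have "\<bar>?V (Suc k) - ?V a - ?V (Suc k - a)\<bar> \<le> 3 * \<bar>?V (Suc k)\<bar>"
      by linarith
    moreover have "1 / 2 * \<bar>?V (Suc k)\<bar> \<le> \<bar>1 + 3 * x\<bar> * \<bar>?V (Suc k)\<bar>"
      by (rule mult_right_mono[OF r]) simp
    ultimately have "\<bar>tri_rowsum x k a\<bar> \<le> 3 * \<bar>?V (Suc k)\<bar> / (1 / 2 * \<bar>?V (Suc k)\<bar>)"
      unfolding tri_rowsum_def abs_divide abs_mult using P by (intro frac_le) auto
    also have "\<dots> = 6"
      using P by simp
    finally show ?thesis .
  qed
  then have "(\<Sum>a = 1..k. \<bar>tri_rowsum x k a\<bar>) \<le> 6 * real k"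
    using sum_bounded_above[of "{1..k}" "\<lambda>a. \<bar>tri_rowsum x k a\<bar>" 6] by simp
  then show ?thesis
    unfolding tri_total_def using sum_abs[of "tri_rowsum x k" "{1..k}"] by linarith
qed

context far_inverse
begin

lemma tri_total_eq_gamma0:
  assumes "1 \<le> k"
  shows "tri_total x k = gamma0 k x"
proof -
  define r where "r = 1 + 3 * x"
  have r: "r \<noteq> 0"
    using one_plus_3x_ne_0 by (simp add: r_def)
  have "tri_total x k = (real k * P - 2 * (\<Sum>a = 1..k. V a)) / (r * P)"
    unfolding tri_total_def tri_rowsum_def r_def[symmetric] using sum_reflect[of V k]
    by (simp add: sum_divide_distrib[symmetric] sum_subtractf)
  also have "\<dots> = gamma0 k x"
    unfolding gamma0_def chebU_eq_lucasU lucasU_psi_sum[OF x_ne_0 one_plus_3x_ne_0]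
      r_def[symmetric] using assms r lucasU_ne_0 x_ne_0
    by (simp add: field_simps power2_eq_square)
  finally show ?thesis .
qed

lemma sum_tri_rowsum_squares:
  "(\<Sum>a = 1..k. tri_rowsum x k a ^ 2)
     = (real k - 4 * (\<Sum>a = 1..k. V a) / P
        + (2 * (\<Sum>a = 1..k. V a ^ 2) + 2 * (\<Sum>a = 1..k. V a * V (Suc k - a))) / P\<^sup>2)
       / (1 + 3 * x)\<^sup>2"
proof -
  define r where "r = 1 + 3 * x"
  have r: "r \<noteq> 0"
    using one_plus_3x_ne_0 by (simp add: r_def)
  have "tri_rowsum x k a ^ 2 = (1 - 2 * (V a + V (Suc k - a)) / P
      + (V a ^ 2 + 2 * (V a * V (Suc k - a)) + V (Suc k - a) ^ 2) / P\<^sup>2) / r\<^sup>2" for a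
    unfolding tri_rowsum_def r_def[symmetric] using lucasU_ne_0 r
    by (simp add: field_simps power2_eq_square)
  then show ?thesis
    unfolding r_def using sum_reflect[of V k] sum_reflect[of "\<lambda>a. V a ^ 2" k]
    by (simp add: sum_divide_distrib[symmetric] sum.distrib sum_subtractf sum_distrib_left[symmetric])
qed

lemma sum_far_inv_diag:
  "(\<Sum>a = 1..k. far_inv x k a a)
     = - (\<Sum>a = 1..k. V a * V (Suc k - a)) / (x * P)
       + x * (\<Sum>a = 1..k. tri_rowsum x k a ^ 2) / (1 - x * tri_total x k)"
proof -
  have "(\<Sum>a = 1..k. tri_inv x k a a) = (\<Sum>a = 1..k. - (V a * V (Suc k - a)) / (x * P))"
    by (simp add: tri_inv_def)
  also have "\<dots> = - (\<Sum>a = 1..k. V a * V (Suc k - a)) / (x * P)"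
    by (simp add: sum_negf sum_divide_distrib)
  finally have "(\<Sum>a = 1..k. tri_inv x k a a) = - (\<Sum>a = 1..k. V a * V (Suc k - a)) / (x * P)" .
  moreover have "(\<Sum>a = 1..k. x * tri_rowsum x k a * tri_rowsum x k a / (1 - x * tri_total x k))
      = x * (\<Sum>a = 1..k. tri_rowsum x k a ^ 2) / (1 - x * tri_total x k)"
    by (simp add: sum_divide_distrib[symmetric] sum_distrib_left power2_eq_square mult.assoc)
  ultimately show ?thesis
    by (simp add: far_inv_def sum.distrib)
qed

lemma cyc_hertz_gf_eq_trace:
  assumes "1 \<le> k" and "1 - x \<noteq> 0" and "1 - 3 * x \<noteq> 0"
  shows "cyc_hertz_gf k x = 1 - real k + (\<Sum>a = 1..k. far_inv x k a a)"
proof -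
  have cheb: "chebU k (psi x) = P" "chebU (k - 1) (psi x) = V k"
    using assms(1) by (simp_all add: chebU_eq_lucasU)
  have x1: "x \<noteq> 1"
    using assms(2) by simp
  have "cyc_hertz_gf k x = 1 - real k - (\<Sum>a = 1..k. V a * V (Suc k - a)) / (x * P)
      + x * ((real k - 4 * (\<Sum>a = 1..k. V a) / P
              + (2 * (\<Sum>a = 1..k. V a ^ 2) + 2 * (\<Sum>a = 1..k. V a * V (Suc k - a))) / P\<^sup>2)
             / (1 + 3 * x)\<^sup>2)
        / (1 - x * gamma0 k x)"
    using cyc_hertz_gf_identity[where x = x and k = k and Lin = "\<Sum>a = 1..k. V a"
        and Sq = "\<Sum>a = 1..k. V a ^ 2" and Conv = "\<Sum>a = 1..k. V a * V (Suc k - a)"]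
      x_ne_0 one_plus_3x_ne_0 assms(2,3) lucasU_ne_0 denom_ne_0
      lucasU_psi_cassini[OF x_ne_0, of k] lucasU_psi_sum[OF x_ne_0 one_plus_3x_ne_0, of k]
      lucasU_psi_sum_squares[OF x_ne_0 one_plus_3x_ne_0 x1, of k]
      lucasU_psi_convolution[OF x_ne_0 one_plus_3x_ne_0 x1, of k]
    unfolding cheb tri_total_eq_gamma0[OF assms(1)] by simp
  also have "\<dots> = 1 - real k + (\<Sum>a = 1..k. far_inv x k a a)"
    unfolding sum_far_inv_diag sum_tri_rowsum_squares tri_total_eq_gamma0[OF assms(1)] by simp
  finally show ?thesis .
qed

end

lemma cyc_hertz_count_sums_gf:
  assumes k: "1 \<le> k" and x: "x \<noteq> 0" and small: "\<bar>x\<bar> < 1 / (10 * real k)"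
  shows "(\<lambda>n. real (cyc_hertz_count n k) * x ^ n) sums cyc_hertz_gf k x"
proof -
  have kx: "real k * \<bar>x\<bar> < 1 / 10"
    using small k by (simp add: field_simps)
  then have x_small: "\<bar>x\<bar> < 1 / 10"
    using k mult_right_mono[of 1 "real k" "\<bar>x\<bar>"] by simp
  have psi: "1 \<le> \<bar>psi x\<bar>"
    using x x_small by (intro one_le_abs_psi) auto
  have r: "1 / 2 \<le> \<bar>1 + 3 * x\<bar>"
    using x_small by linarith
  have "\<bar>x * tri_total x k\<bar> \<le> \<bar>x\<bar> * (6 * real k)"
    unfolding abs_mult by (intro mult_left_mono abs_tri_total_le psi r) simp
  also have "\<dots> = 6 * (real k * \<bar>x\<bar>)"
    by simp
  also have "\<dots> < 1"
    using kx by linarith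
  finally have D: "1 - x * tri_total x k \<noteq> 0"
    by auto
  interpret far_inverse x k
    using x D r one_le_abs_lucasU[OF psi, of k] by unfold_locales auto
  have "(\<Sum>a = 1..k. far_walks_gf x k a a) = (\<Sum>a = 1..k. far_inv x k a a)"
    using kx by (intro sum.cong refl far_walks_gf_eq_far_inv) auto
  moreover have "1 - x \<noteq> 0" "1 - 3 * x \<noteq> 0"
    using x_small by auto
  ultimately show ?thesis
    using cyc_hertz_count_sums[of k x] kx cyc_hertz_gf_eq_trace[OF k] by simp
qed

theorem mainTheorem4:
  fixes k :: nat
  assumes "k \<ge> 2"
  shows "\<forall>\<^sub>F x in at (0::real).
           (\<lambda>n. real (cyc_hertz_count n k) * x ^ n) sums cyc_hertz_gf k x"
proof -
  have "0 < 1 / (10 * real k)"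
    using assms by simp
  moreover have "\<forall>x \<in> UNIV. x \<noteq> 0 \<and> dist x 0 < 1 / (10 * real k) \<longrightarrow>
      (\<lambda>n. real (cyc_hertz_count n k) * x ^ n) sums cyc_hertz_gf k x"
    using assms by (auto simp: dist_real_def intro: cyc_hertz_count_sums_gf)
  ultimately show ?thesis
    unfolding eventually_at by blast
qed

end
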